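(* Let $k\ge 6$ and let $H$ be the complement of $P_k$ or of $C_k$. Then $\eta(H)=\lfloor (k+\omega(H))/2\rfloor$, where $\omega(H)$ is the size of a maximum clique of $H$. Explicitly, writing $k=4t+r$ with $r\in\{0,1,2,3\}$: $\eta(\bar C_k)=3t,3t,3t+1,3t+2$ and $\eta(\bar P_k)=3t,3t+1,3t+1,3t+2$ for $r=0,1,2,3$ respectively.
   Context: $\bar F$ is the complement of $F$; $P_k$, $C_k$ are the path and cycle on $k$ vertices. A $K_t$-minor function of $H$ is a map $f:V(H)\to\{1,\dots,t\}$ (defined on all vertices) such that each preimage $f^{-1}(i)$ induces a connected subgraph of $H$ and for all $i\ne j$ there is at least one edge between $f^{-1}(i)$ and $f^{-1}(j)$; $\eta(H)$ is the largest $t$ for which such a function exists. *)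

theory Defs
  imports Main
begin

text \<open>Simple graphs are given by a finite vertex set V and a symmetric irreflexive
adjacency predicate E.\<close>

definition induced_connected :: "('a \<Rightarrow> 'a \<Rightarrow> bool) \<Rightarrow> 'a set \<Rightarrow> bool" where
  "induced_connected E S \<longleftrightarrow> S \<noteq> {} \<and>
     (\<forall>x\<in>S. \<forall>y\<in>S. (\<lambda>u v. u \<in> S \<and> v \<in> S \<and> E u v)\<^sup>*\<^sup>* x y)"

definition minor_function :: "'a set \<Rightarrow> ('a \<Rightarrow> 'a \<Rightarrow> bool) \<Rightarrow> nat \<Rightarrow> ('a \<Rightarrow> nat) \<Rightarrow> bool" where
  "minor_function V E t f \<longleftrightarrow>
     (\<forall>v\<in>V. f v \<in> {1..t}) \<and>
     (\<forall>i\<in>{1..t}. induced_connected E {v\<in>V. f v = i}) \<and>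
     (\<forall>i\<in>{1..t}. \<forall>j\<in>{1..t}. i \<noteq> j \<longrightarrow>
        (\<exists>u\<in>V. \<exists>v\<in>V. f u = i \<and> f v = j \<and> E u v))"

definition hadwiger :: "'a set \<Rightarrow> ('a \<Rightarrow> 'a \<Rightarrow> bool) \<Rightarrow> nat" where
  "hadwiger V E = Max {t. \<exists>f. minor_function V E t f}"

definition is_clique :: "'a set \<Rightarrow> ('a \<Rightarrow> 'a \<Rightarrow> bool) \<Rightarrow> 'a set \<Rightarrow> bool" where
  "is_clique V E S \<longleftrightarrow> S \<subseteq> V \<and> (\<forall>x\<in>S. \<forall>y\<in>S. x \<noteq> y \<longrightarrow> E x y)"

definition clique_number :: "'a set \<Rightarrow> ('a \<Rightarrow> 'a \<Rightarrow> bool) \<Rightarrow> nat" where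
  "clique_number V E = Max {card S | S. is_clique V E S}"

definition path_adj :: "nat \<Rightarrow> nat \<Rightarrow> nat \<Rightarrow> bool" where
  "path_adj k i j \<longleftrightarrow> i < k \<and> j < k \<and> (j = i + 1 \<or> i = j + 1)"

definition cycle_adj :: "nat \<Rightarrow> nat \<Rightarrow> nat \<Rightarrow> bool" where
  "cycle_adj k i j \<longleftrightarrow> path_adj k i j \<or> (i = 0 \<and> j = k - 1) \<or> (i = k - 1 \<and> j = 0)"

definition compl_adj :: "('a \<Rightarrow> 'a \<Rightarrow> bool) \<Rightarrow> 'a \<Rightarrow> 'a \<Rightarrow> bool" where
  "compl_adj E i j \<longleftrightarrow> i \<noteq> j \<and> \<not> E i j"

end

theory Submission
  imports Defs
begin

text \<open>Upper bound: the vertices forming a class of a \<open>K\<^sub>t\<close>-minor function on their own are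
  pairwise adjacent, so there are at most \<open>\<omega>\<close> of them, and every other class has at least two
  vertices; hence \<open>2t \<le> n + \<omega>\<close>.
  Lower bound for the complement of \<open>C\<^sub>k\<close> or \<open>P\<^sub>k\<close>, in which any two non-consecutive vertices
  are adjacent: make the \<open>\<omega>\<close> even vertices \<open>0, 2, 4, \<dots>\<close> singleton classes and group the
  remaining vertices into \<open>\<lfloor>(k - \<omega>)/2\<rfloor>\<close> classes of two or three vertices lying at least three
  steps apart. Such a class is a star around its first vertex, two classes are joined through
  their centres, and whenever the centre is next to a singleton, another member of the class
  is not. This gives \<open>\<lfloor>(k + \<omega>)/2\<rfloor>\<close> classes.\<close>

lemma minor_functionI:
  assumes sym: "\<And>u v. E u v \<Longrightarrow> E v u"
    and range: "\<And>v. v \<in> V \<Longrightarrow> f v \<in> {1..t}"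
    and centre: "\<And>i. i \<in> {1..t} \<Longrightarrow>
      \<exists>c\<in>V. f c = i \<and> (\<forall>u\<in>V. f u = i \<longrightarrow> u \<noteq> c \<longrightarrow> E c u)"
    and adjacent: "\<And>i j. 1 \<le> i \<Longrightarrow> i < j \<Longrightarrow> j \<le> t \<Longrightarrow>
      \<exists>u\<in>V. \<exists>v\<in>V. f u = i \<and> f v = j \<and> E u v"
  shows "minor_function V E t f"
  unfolding minor_function_def
proof (intro conjI ballI impI)
  fix v assume "v \<in> V" then show "f v \<in> {1..t}" by (rule range)
next
  fix i assume i: "i \<in> {1..t}"
  obtain c where c: "c \<in> V" "f c = i" "\<forall>u\<in>V. f u = i \<longrightarrow> u \<noteq> c \<longrightarrow> E c u"
    using centre[OF i] by blast
  let ?S = "{v \<in> V. f v = i}"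
  let ?R = "\<lambda>u v. u \<in> ?S \<and> v \<in> ?S \<and> E u v"
  have from_centre: "?R\<^sup>*\<^sup>* c y" if "y \<in> ?S" for y
    using that c by (cases "y = c") auto
  have to_centre: "?R\<^sup>*\<^sup>* x c" if "x \<in> ?S" for x
    using that c sym by (cases "x = c") (auto intro!: r_into_rtranclp)
  show "induced_connected E ?S"
    unfolding induced_connected_def
    using c from_centre to_centre by (auto intro: rtranclp_trans)
next
  fix i j assume i: "i \<in> {1..t}" and j: "j \<in> {1..t}" and "i \<noteq> j"
  then consider "i < j" | "j < i" by linarith
  then show "\<exists>u\<in>V. \<exists>v\<in>V. f u = i \<and> f v = j \<and> E u v"
  proof cases
    case 1
    then show ?thesis using adjacent i j by auto
  next
    case 2
    then obtain u v where "u \<in> V" "v \<in> V" "f u = j" "f v = i" "E u v"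
      using adjacent[of j i] i j by auto
    then show ?thesis using sym by blast
  qed
qed

lemma minor_function_mono:
  assumes subgraph: "\<And>u v. E u v \<Longrightarrow> E' u v" and "minor_function V E t f"
  shows "minor_function V E' t f"
proof -
  have "induced_connected E' S" if "induced_connected E S" for S
  proof -
    have "(\<lambda>u v. u \<in> S \<and> v \<in> S \<and> E' u v)\<^sup>*\<^sup>* x y"
      if "(\<lambda>u v. u \<in> S \<and> v \<in> S \<and> E u v)\<^sup>*\<^sup>* x y" for x y
      using that by (rule rtranclp_mono[THEN predicate2D, rotated]) (auto simp: subgraph)
    then show ?thesis using that unfolding induced_connected_def by blast
  qed
  then show ?thesis using assms unfolding minor_function_def by meson
qed

lemma finite_clique_sizes: "finite V \<Longrightarrow> finite {card S | S. is_clique V E S}"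
  by (rule finite_subset[of _ "card ` Pow V"]) (auto simp: is_clique_def)

lemma card_le_clique_number: "finite V \<Longrightarrow> is_clique V E S \<Longrightarrow> card S \<le> clique_number V E"
  unfolding clique_number_def by (rule Max_ge) (auto intro: finite_clique_sizes)

lemma clique_number_le:
  assumes "finite V" "\<And>S. is_clique V E S \<Longrightarrow> card S \<le> B"
  shows "clique_number V E \<le> B"
proof -
  have "is_clique V E {}" by (simp add: is_clique_def)
  then show ?thesis
    unfolding clique_number_def using assms finite_clique_sizes[OF assms(1)]
    by (subst Max_le_iff) auto
qed

lemma minor_function_singleton_classes_clique:
  assumes "minor_function V E t f"
  shows "is_clique V E {v \<in> V. \<forall>u\<in>V. f u = f v \<longrightarrow> u = v}"
  unfolding is_clique_def
proof (intro conjI ballI impI)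
  fix x y assume x: "x \<in> {v \<in> V. \<forall>u\<in>V. f u = f v \<longrightarrow> u = v}"
    and y: "y \<in> {v \<in> V. \<forall>u\<in>V. f u = f v \<longrightarrow> u = v}" and "x \<noteq> y"
  then have "f x \<noteq> f y" "f x \<in> {1..t}" "f y \<in> {1..t}"
    using assms by (auto simp: minor_function_def)
  then obtain u v where "u \<in> V" "v \<in> V" "f u = f x" "f v = f y" "E u v"
    using assms unfolding minor_function_def by blast
  with x y show "E x y" by auto
qed auto

lemma minor_function_le:
  assumes fin: "finite V" and mf: "minor_function V E t f"
  shows "2 * t \<le> card V + clique_number V E"
proof -
  define C where "C = {v \<in> V. \<forall>u\<in>V. f u = f v \<longrightarrow> u = v}"
  define I where "I = {1..t} - f ` C"
  define B where "B i = {v \<in> V. f v = i}" for i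
  have range: "\<forall>v\<in>V. f v \<in> {1..t}" using mf by (simp add: minor_function_def)
  have C_V: "C \<subseteq> V" by (auto simp: C_def)
  have card_C: "card C \<le> clique_number V E"
    using card_le_clique_number[OF fin minor_function_singleton_classes_clique[OF mf]]
    by (simp add: C_def)
  have inj: "inj_on f C" by (auto simp: C_def inj_on_def)
  have fC: "f ` C \<subseteq> {1..t}" using range C_V by auto
  have "card C \<le> t" using card_mono[OF _ fC] card_image[OF inj] by simp
  have card_I: "card I = t - card C"
    using card_Diff_subset[OF _ fC] card_image[OF inj] finite_subset[OF fC]
    by (simp add: I_def)
  have two: "2 \<le> card (B i)" if "i \<in> I" for i
  proof -
    have "B i \<noteq> {}"
      using mf that unfolding minor_function_def induced_connected_def B_def I_def by blast
    then obtain v where v: "v \<in> B i" by blast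
    then have "v \<notin> C" using that by (auto simp: I_def B_def)
    then obtain u where "u \<in> V" "f u = f v" "u \<noteq> v" using v by (auto simp: C_def B_def)
    then have "card {u, v} \<le> card (B i)"
      using v fin by (intro card_mono) (auto simp: B_def)
    then show ?thesis using \<open>u \<noteq> v\<close> by simp
  qed
  have "2 * card I \<le> (\<Sum>i\<in>I. card (B i))"
    using sum_mono[of I "\<lambda>_. 2 :: nat" "\<lambda>i. card (B i)"] two by (simp add: mult.commute)
  also have "\<dots> = card (\<Union>i\<in>I. B i)"
    by (rule card_UN_disjoint[symmetric]) (use fin in \<open>auto simp: B_def I_def\<close>)
  also have "\<dots> \<le> card (V - C)"
    by (rule card_mono) (use fin in \<open>auto simp: B_def I_def\<close>)
  also have "\<dots> = card V - card C" using fin C_V by (simp add: card_Diff_subset finite_subset)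
  finally show ?thesis using card_C card_mono[OF fin C_V] card_I \<open>card C \<le> t\<close> by linarith
qed

lemma hadwiger_eqI:
  assumes "finite V" and "minor_function V E t f"
    and "\<And>t' g. minor_function V E t' g \<Longrightarrow> t' \<le> t"
  shows "hadwiger V E = t"
proof -
  let ?T = "{t. \<exists>f. minor_function V E t f}"
  have "?T \<subseteq> {..t}" "t \<in> ?T" using assms by auto
  then show ?thesis
    unfolding hadwiger_def by (meson Max_eqI finite_atMost finite_subset atMost_iff subsetD)
qed

lemma hadwiger_eq_half:
  assumes fin: "finite V" and \<omega>: "clique_number V E \<le> w"
    and mf: "minor_function V E ((card V + w) div 2) f"
  shows "hadwiger V E = (card V + w) div 2"
    and "(card V + clique_number V E) div 2 = (card V + w) div 2"
proof -
  show "hadwiger V E = (card V + w) div 2"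
    using minor_function_le[OF fin] \<omega> by (intro hadwiger_eqI[OF fin mf]) fastforce
  show "(card V + clique_number V E) div 2 = (card V + w) div 2"
    using minor_function_le[OF fin mf] \<omega> by linarith
qed

lemma card_le_no_consecutive:
  fixes S :: "nat set"
  assumes "S \<subseteq> {a..<b}" and "\<And>i. i \<in> S \<Longrightarrow> Suc i \<notin> S"
  shows "card S \<le> (b - a + 1) div 2"
proof -
  have inj: "inj_on (\<lambda>i. (i - a) div 2) S"
  proof (rule inj_onI)
    fix x y assume x: "x \<in> S" and y: "y \<in> S" and eq: "(x - a) div 2 = (y - a) div 2"
    have "a \<le> x" "a \<le> y" using x y assms(1) by auto
    moreover have "x - a = 2 * ((x - a) div 2) + (x - a) mod 2" "(x - a) mod 2 < 2"
      "y - a = 2 * ((y - a) div 2) + (y - a) mod 2" "(y - a) mod 2 < 2"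
      by simp_all
    ultimately have "x = y \<or> y = Suc x \<or> x = Suc y" using eq by linarith
    then show "x = y" using assms(2) x y by blast
  qed
  have "(i - a) div 2 < (b - a + 1) div 2" if "i \<in> S" for i
  proof -
    have "a \<le> i" "i < b" using that assms(1) by auto
    then have "(i - a + 2) div 2 \<le> (b - a + 1) div 2" by (intro div_le_mono) linarith
    then show ?thesis by simp
  qed
  then have "(\<lambda>i. (i - a) div 2) ` S \<subseteq> {..<(b - a + 1) div 2}" by auto
  from card_inj_on_le[OF inj this] show ?thesis by simp
qed

lemma path_complement_clique_card:
  assumes "is_clique {0..<k} (compl_adj (path_adj k)) S"
  shows "card S \<le> (k + 1) div 2"
proof -
  have "S \<subseteq> {0..<k}" using assms by (simp add: is_clique_def)
  moreover have "Suc i \<notin> S" if "i \<in> S" for i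
  proof
    assume "Suc i \<in> S"
    then have "compl_adj (path_adj k) i (Suc i)" "Suc i < k"
      using assms that \<open>S \<subseteq> {0..<k}\<close> unfolding is_clique_def by auto
    then show False by (simp add: compl_adj_def path_adj_def)
  qed
  ultimately show ?thesis using card_le_no_consecutive[of S 0 k] by simp
qed

lemma cycle_complement_clique_card:
  assumes clique: "is_clique {0..<k} (compl_adj (cycle_adj k)) S" and "3 \<le> k"
  shows "card S \<le> k div 2"
proof -
  have S: "S \<subseteq> {0..<k}" using clique by (simp add: is_clique_def)
  have no_consecutive: "Suc i \<notin> S" if "i \<in> S" for i
  proof
    assume "Suc i \<in> S"
    then have "compl_adj (cycle_adj k) i (Suc i)" "Suc i < k"
      using clique that S unfolding is_clique_def by auto
    then show False by (simp add: compl_adj_def cycle_adj_def path_adj_def)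
  qed
  show ?thesis
  proof (cases "k - 1 \<in> S")
    case False
    have "S \<subseteq> {0..<k - 1}"
    proof
      fix x assume "x \<in> S"
      then have "x < k" "x \<noteq> k - 1" using S False by auto
      then show "x \<in> {0..<k - 1}" by simp
    qed
    then show ?thesis using card_le_no_consecutive[of S 0 "k - 1"] no_consecutive by simp
  next
    case True
    have "0 \<notin> S"
    proof
      assume "0 \<in> S"
      then have "compl_adj (cycle_adj k) 0 (k - 1)"
        using True clique \<open>3 \<le> k\<close> unfolding is_clique_def by simp
      then show False by (simp add: compl_adj_def cycle_adj_def)
    qed
    moreover have "k - 2 \<notin> S"
    proof
      assume "k - 2 \<in> S"
      moreover have "Suc (k - 2) = k - 1" using \<open>3 \<le> k\<close> by simp
      ultimately show False using True no_consecutive by metis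
    qed
    ultimately have "S - {k - 1} \<subseteq> {0..<k} - {0, k - 2, k - 1}" using S by blast
    also have "\<dots> = {1..<k - 2}" using \<open>3 \<le> k\<close> by auto
    finally have "S - {k - 1} \<subseteq> {1..<k - 2}" .
    then have "card (S - {k - 1}) \<le> (k - 2 - 1 + 1) div 2"
      by (rule card_le_no_consecutive) (use no_consecutive in blast)
    moreover have "card S = card (S - {k - 1}) + 1"
      using card.remove[OF finite_subset[OF S] True] by simp
    ultimately show ?thesis using \<open>3 \<le> k\<close> by linarith
  qed
qed

text \<open>The even vertices \<open>0, 2, \<dots>, 2L - 2\<close> are singleton classes; any other vertex \<open>v\<close>
  joins class \<open>L + 1 + g\<close> with \<open>g = v div 2 mod q\<close>, whose centre is \<open>2g + 1\<close>.\<close>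
definition pairing_map :: "nat \<Rightarrow> nat \<Rightarrow> nat \<Rightarrow> nat" where
  "pairing_map L q v = (if even v \<and> v div 2 < L then v div 2 + 1 else L + 1 + v div 2 mod q)"

lemma pairing_map_singleton: "a < L \<Longrightarrow> pairing_map L q (2 * a) = a + 1"
  by (simp add: pairing_map_def)

lemma pairing_map_centre: "g < q \<Longrightarrow> pairing_map L q (2 * g + 1) = L + 1 + g"
  by (simp add: pairing_map_def)

lemma pairing_map_range:
  assumes "0 < q"
  shows "pairing_map L q v \<in> {1..L + q}"
proof -
  have "v div 2 mod q < q" using assms by simp
  then show ?thesis by (simp add: pairing_map_def)
qed

lemma mod_eq_imp_add_le:
  fixes x q g :: nat
  assumes "x mod q = g" and "x \<noteq> g"
  shows "g + q \<le> x"
proof -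
  have "x div q \<noteq> 0"
  proof
    assume "x div q = 0"
    then have "x = x mod q" using div_mult_mod_eq[of x q] by simp
    with assms show False by simp
  qed
  then have "q \<le> q * (x div q)" by simp
  then show ?thesis using mult_div_mod_eq[of q x] assms(1) by linarith
qed

text \<open>\<open>E\<close> contains every pair of non-consecutive vertices of \<open>{0..<n}\<close> except possibly \<open>{0, w}\<close>,
  the wrap-around pair of a cycle.\<close>
locale long_edges =
  fixes E :: "nat \<Rightarrow> nat \<Rightarrow> bool" and n w :: nat
  assumes sym: "E u v \<Longrightarrow> E v u"
    and long_edge: "u + 1 < v \<Longrightarrow> v < n \<Longrightarrow> \<not> (u = 0 \<and> v = w) \<Longrightarrow> E u v"

lemma long_edges_path_complement: "long_edges (compl_adj (path_adj n)) n n"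
  by unfold_locales (auto simp: compl_adj_def path_adj_def)

lemma long_edges_cycle_complement: "long_edges (compl_adj (cycle_adj n)) n (n - 1)"
  by unfold_locales (auto simp: compl_adj_def cycle_adj_def path_adj_def)

locale pairing = long_edges +
  fixes L q :: nat
  assumes singletons_fit: "2 * L \<le> n + 1" and n_le: "n \<le> 2 * L + 1"
    and w_ge: "n \<le> w + 1" "2 * L \<le> w + 1"
    and q_def: "q = (n - L) div 2" and q_ge_2: "2 \<le> q"
begin

lemma q_bounds: "2 * q \<le> n - L" "n - L \<le> 2 * q + 1" "2 * q \<le> L + 1" "3 \<le> L" "L \<le> n"
  using singletons_fit n_le q_def q_ge_2 by linarith+

lemma class_has_centre:
  assumes i: "i \<in> {1..L + q}"
  shows "\<exists>c\<in>{0..<n}. pairing_map L q c = i \<and>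
    (\<forall>u\<in>{0..<n}. pairing_map L q u = i \<longrightarrow> u \<noteq> c \<longrightarrow> E c u)"
proof (cases "i \<le> L")
  case True
  then have "pairing_map L q u = i \<longleftrightarrow> u = 2 * (i - 1)" for u
    using i by (auto simp: pairing_map_def)
  moreover have "2 * (i - 1) < n" using True i singletons_fit by auto
  ultimately show ?thesis by auto
next
  case False
  define g where "g = i - L - 1"
  have g: "g < q" "i = L + 1 + g" using False i by (auto simp: g_def)
  have "E (2 * g + 1) u"
    if u: "u < n" "pairing_map L q u = i" "u \<noteq> 2 * g + 1" for u
  proof -
    have non_singleton: "\<not> (even u \<and> u div 2 < L)" and "u div 2 mod q = g"
      using u(2) g by (auto simp: pairing_map_def split: if_splits)
    moreover have "u div 2 \<noteq> g"
      using non_singleton u(3) g q_bounds by (auto elim: oddE)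
    ultimately have "g + q \<le> u div 2" by (intro mod_eq_imp_add_le)
    then show ?thesis using long_edge[of "2 * g + 1" u] u(1) q_ge_2 by auto
  qed
  moreover have "2 * g + 1 < n" using g q_bounds by linarith
  ultimately show ?thesis using pairing_map_centre[where L = L, OF g(1)] g(2) by auto
qed

lemma singleton_adjacent_pair:
  assumes a: "a < L" and g: "g < q"
  shows "\<exists>v\<in>{0..<n}. pairing_map L q v = L + 1 + g \<and> E (2 * a) v"
proof (cases "a = g \<or> a = g + 1")
  case False
  then consider "a < g" | "g + 1 < a" by linarith
  then have "E (2 * a) (2 * g + 1)"
  proof cases
    case 1
    then show ?thesis using long_edge[of "2 * a" "2 * g + 1"] g q_bounds w_ge by linarith
  next
    case 2
    then show ?thesis using long_edge[of "2 * g + 1" "2 * a"] sym a singletons_fit by auto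
  qed
  moreover have "2 * g + 1 < n" using g q_bounds by linarith
  ultimately show ?thesis using pairing_map_centre[where L = L, OF g] by auto
next
  case near: True
  txt \<open>The centre \<open>2g + 1\<close> is next to \<open>2a\<close>; use the member of the class with index \<open>g + q\<close>.\<close>
  obtain p where p: "p div 2 = g + q" "p < n" "\<not> (even p \<and> p div 2 < L)"
  proof (cases "2 * (g + q) + 1 < n")
    case True
    then show ?thesis using that[of "2 * (g + q) + 1"] by simp
  next
    case False
    then show ?thesis using that[of "2 * (g + q)"] g q_bounds by simp
  qed
  have "pairing_map L q p = L + 1 + g" using p(1,3) g by (simp add: pairing_map_def)
  moreover have "E (2 * a) p"
  proof (rule long_edge)
    have "2 * (p div 2) \<le> p" "p \<le> 2 * (p div 2) + 1" by simp_all
    then show "2 * a + 1 < p" "\<not> (2 * a = 0 \<and> p = w)"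
      using p(1,2) near q_bounds w_ge q_ge_2 by auto
  qed (rule p(2))
  ultimately show ?thesis using p(2) by auto
qed

lemma classes_adjacent:
  assumes ij: "1 \<le> i" "i < j" "j \<le> L + q"
  shows "\<exists>u\<in>{0..<n}. \<exists>v\<in>{0..<n}. pairing_map L q u = i \<and> pairing_map L q v = j \<and> E u v"
proof -
  consider "j \<le> L" | "i \<le> L" "L < j" | "L < i" by linarith
  then show ?thesis
  proof cases
    case 1
    have "E (2 * (i - 1)) (2 * (j - 1))"
    proof (rule long_edge)
      show "2 * (i - 1) + 1 < 2 * (j - 1)" "2 * (j - 1) < n"
        using 1 ij singletons_fit by linarith+
      have "2 * (j - 1) \<noteq> w" using 1 ij w_ge by linarith
      then show "\<not> (2 * (i - 1) = 0 \<and> 2 * (j - 1) = w)" by simp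
    qed
    then show ?thesis
      using pairing_map_singleton[of "i - 1" L q] pairing_map_singleton[of "j - 1" L q] 1 ij singletons_fit
      by (intro bexI[of _ "2 * (i - 1)"] bexI[of _ "2 * (j - 1)"]) auto
  next
    case 2
    have "i - 1 < L" "j - L - 1 < q" using 2 ij by linarith+
    with singleton_adjacent_pair obtain v
      where "v \<in> {0..<n}" "pairing_map L q v = L + 1 + (j - L - 1)" "E (2 * (i - 1)) v"
      by blast
    moreover have "L + 1 + (j - L - 1) = j" using 2 by simp
    moreover have "2 * (i - 1) < n" "pairing_map L q (2 * (i - 1)) = i"
      using 2 ij singletons_fit pairing_map_singleton[of "i - 1" L q] by auto
    ultimately show ?thesis by (intro bexI[of _ "2 * (i - 1)"] bexI[of _ v]) simp_all
  next
    case 3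
    have "E (2 * (i - L - 1) + 1) (2 * (j - L - 1) + 1)"
      using long_edge[of "2 * (i - L - 1) + 1" "2 * (j - L - 1) + 1"] 3 ij q_bounds by auto
    then show ?thesis
      using pairing_map_centre[of "i - L - 1" q L] pairing_map_centre[of "j - L - 1" q L] 3 ij q_bounds
      by (intro bexI[of _ "2 * (i - L - 1) + 1"] bexI[of _ "2 * (j - L - 1) + 1"]) auto
  qed
qed

lemma pairing_map_minor_function: "minor_function {0..<n} E ((n + L) div 2) (pairing_map L q)"
proof -
  have "(n + L) div 2 = L + q" using q_def q_bounds(5) by presburger
  then show ?thesis
    using q_ge_2 minor_functionI[OF sym pairing_map_range class_has_centre classes_adjacent] by simp
qed

end

text \<open>For \<open>k = 6\<close> (and \<open>k = 7\<close> for the path) only one non-singleton class exists, so the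
  partner argument does not apply and the construction is checked vertex by vertex.\<close>

lemma cycle_complement_6_minor_function:
  "minor_function {0..<6} (compl_adj (cycle_adj 6)) 4 (pairing_map 3 1)"
proof (rule minor_functionI)
  have V: "{0..<6::nat} = {0, 1, 2, 3, 4, 5}" by auto
  show "compl_adj (cycle_adj 6) v u" if "compl_adj (cycle_adj 6) u v" for u v
    using that by (rule long_edges.sym[OF long_edges_cycle_complement])
  show "pairing_map 3 1 v \<in> {1..4}" for v by (simp add: pairing_map_def)
  fix i assume "i \<in> {1..4::nat}"
  then have "i = 1 \<or> i = 2 \<or> i = 3 \<or> i = 4" by auto
  then show "\<exists>c\<in>{0..<6}. pairing_map 3 1 c = i \<and>
      (\<forall>u\<in>{0..<6}. pairing_map 3 1 u = i \<longrightarrow> u \<noteq> c \<longrightarrow> compl_adj (cycle_adj 6) c u)"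
    unfolding V by (elim disjE) (simp_all add: pairing_map_def compl_adj_def cycle_adj_def path_adj_def)
next
  have V: "{0..<6::nat} = {0, 1, 2, 3, 4, 5}" by auto
  fix i j :: nat assume "1 \<le> i" "i < j" "j \<le> 4"
  then have "(i = 1 \<or> i = 2 \<or> i = 3) \<and> (j = 2 \<or> j = 3 \<or> j = 4) \<and> i < j" by auto
  then show "\<exists>u\<in>{0..<6}. \<exists>v\<in>{0..<6}.
      pairing_map 3 1 u = i \<and> pairing_map 3 1 v = j \<and> compl_adj (cycle_adj 6) u v"
    unfolding V by (elim conjE disjE) (simp_all add: pairing_map_def compl_adj_def cycle_adj_def path_adj_def)
qed

lemma path_complement_7_minor_function:
  "minor_function {0..<7} (compl_adj (path_adj 7)) 5 (pairing_map 4 1)"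
proof (rule minor_functionI)
  have V: "{0..<7::nat} = {0, 1, 2, 3, 4, 5, 6}" by auto
  show "compl_adj (path_adj 7) v u" if "compl_adj (path_adj 7) u v" for u v
    using that by (rule long_edges.sym[OF long_edges_path_complement])
  show "pairing_map 4 1 v \<in> {1..5}" for v by (simp add: pairing_map_def)
  fix i assume "i \<in> {1..5::nat}"
  then have "i = 1 \<or> i = 2 \<or> i = 3 \<or> i = 4 \<or> i = 5" by auto
  then show "\<exists>c\<in>{0..<7}. pairing_map 4 1 c = i \<and>
      (\<forall>u\<in>{0..<7}. pairing_map 4 1 u = i \<longrightarrow> u \<noteq> c \<longrightarrow> compl_adj (path_adj 7) c u)"
    unfolding V by (elim disjE) (simp_all add: pairing_map_def compl_adj_def path_adj_def)
next
  have V: "{0..<7::nat} = {0, 1, 2, 3, 4, 5, 6}" by auto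
  fix i j :: nat assume "1 \<le> i" "i < j" "j \<le> 5"
  then have "(i = 1 \<or> i = 2 \<or> i = 3 \<or> i = 4) \<and> (j = 2 \<or> j = 3 \<or> j = 4 \<or> j = 5) \<and> i < j"
    by auto
  then show "\<exists>u\<in>{0..<7}. \<exists>v\<in>{0..<7}.
      pairing_map 4 1 u = i \<and> pairing_map 4 1 v = j \<and> compl_adj (path_adj 7) u v"
    unfolding V by (elim conjE disjE) (simp_all add: pairing_map_def compl_adj_def path_adj_def)
qed

lemma cycle_complement_minor_function:
  assumes "6 \<le> k"
  shows "\<exists>f. minor_function {0..<k} (compl_adj (cycle_adj k)) ((k + k div 2) div 2) f"
proof (cases "k = 6")
  case True
  then show ?thesis using cycle_complement_6_minor_function by auto
next
  case False
  interpret pairing "compl_adj (cycle_adj k)" k "k - 1" "k div 2" "(k - k div 2) div 2"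
    by (intro pairing.intro long_edges_cycle_complement pairing_axioms.intro)
      (use assms False in auto)
  show ?thesis using pairing_map_minor_function by blast
qed

lemma path_complement_minor_function:
  assumes "6 \<le> k"
  shows "\<exists>f. minor_function {0..<k} (compl_adj (path_adj k)) ((k + (k + 1) div 2) div 2) f"
proof -
  consider "k = 6" | "k = 7" | "8 \<le> k" using assms by linarith
  then show ?thesis
  proof cases
    case 1
    have "minor_function {0..<6} (compl_adj (path_adj 6)) 4 (pairing_map 3 1)"
      by (rule minor_function_mono[OF _ cycle_complement_6_minor_function])
        (auto simp: compl_adj_def cycle_adj_def)
    then show ?thesis using 1 by auto
  next
    case 2
    then show ?thesis using path_complement_7_minor_function by auto
  next
    case 3
    interpret pairing "compl_adj (path_adj k)" k k "(k + 1) div 2" "(k - (k + 1) div 2) div 2"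
      by (intro pairing.intro long_edges_path_complement pairing_axioms.intro) (use 3 in auto)
    show ?thesis using pairing_map_minor_function by blast
  qed
qed

lemma half_sums_mod_4:
  fixes k t r :: nat
  assumes "k = 4 * t + r"
  shows "(k + k div 2) div 2 = 3 * t + (r + r div 2) div 2"
    and "(k + (k + 1) div 2) div 2 = 3 * t + (r + (r + 1) div 2) div 2"
proof -
  have "k div 2 = 2 * t + r div 2" "(k + 1) div 2 = 2 * t + (r + 1) div 2"
    using assms by simp_all
  then show "(k + k div 2) div 2 = 3 * t + (r + r div 2) div 2"
    and "(k + (k + 1) div 2) div 2 = 3 * t + (r + (r + 1) div 2) div 2"
    using assms by simp_all
qed

theorem lemma9:
  fixes k :: nat
  assumes "k \<ge> 6"
  shows "hadwiger {0..<k} (compl_adj (path_adj k))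
           = (k + clique_number {0..<k} (compl_adj (path_adj k))) div 2
       \<and> hadwiger {0..<k} (compl_adj (cycle_adj k))
           = (k + clique_number {0..<k} (compl_adj (cycle_adj k))) div 2
       \<and> (k mod 4 = 0 \<longrightarrow> hadwiger {0..<k} (compl_adj (cycle_adj k)) = 3 * (k div 4)
           \<and> hadwiger {0..<k} (compl_adj (path_adj k)) = 3 * (k div 4))
       \<and> (k mod 4 = 1 \<longrightarrow> hadwiger {0..<k} (compl_adj (cycle_adj k)) = 3 * (k div 4)
           \<and> hadwiger {0..<k} (compl_adj (path_adj k)) = 3 * (k div 4) + 1)
       \<and> (k mod 4 = 2 \<longrightarrow> hadwiger {0..<k} (compl_adj (cycle_adj k)) = 3 * (k div 4) + 1
           \<and> hadwiger {0..<k} (compl_adj (path_adj k)) = 3 * (k div 4) + 1)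
       \<and> (k mod 4 = 3 \<longrightarrow> hadwiger {0..<k} (compl_adj (cycle_adj k)) = 3 * (k div 4) + 2
           \<and> hadwiger {0..<k} (compl_adj (path_adj k)) = 3 * (k div 4) + 2)"
proof -
  have fin: "finite {0..<k}" and card: "card {0..<k} = k" by simp_all
  have "clique_number {0..<k} (compl_adj (cycle_adj k)) \<le> k div 2"
    using assms by (intro clique_number_le[OF fin] cycle_complement_clique_card) auto
  with cycle_complement_minor_function[OF assms]
  have cycle: "hadwiger {0..<k} (compl_adj (cycle_adj k)) = (k + k div 2) div 2"
    "(k + clique_number {0..<k} (compl_adj (cycle_adj k))) div 2 = (k + k div 2) div 2"
    using hadwiger_eq_half[OF fin] unfolding card by blast+
  have "clique_number {0..<k} (compl_adj (path_adj k)) \<le> (k + 1) div 2"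
    by (intro clique_number_le[OF fin] path_complement_clique_card)
  with path_complement_minor_function[OF assms]
  have path: "hadwiger {0..<k} (compl_adj (path_adj k)) = (k + (k + 1) div 2) div 2"
    "(k + clique_number {0..<k} (compl_adj (path_adj k))) div 2 = (k + (k + 1) div 2) div 2"
    using hadwiger_eq_half[OF fin] unfolding card by blast+
  have quarters: "k = 4 * (k div 4) + k mod 4" by simp
  show ?thesis unfolding cycle path half_sums_mod_4[OF quarters] by auto
qed

end
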